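(* Let $\Xi\in\mathcal C$ and write $\Xi=X^\dagger X$ with $X\in\mathcal B(\mathcal H)$. Then $\Xi$ is an extremal point of $\mathcal C$ if and only if $$\mathcal B(\operatorname{Rng}(X))=\operatorname{Span}\Big\{X\Big[\textstyle\bigoplus_{k\in S}(I_{\mathcal H_k}\otimes M_k)\Big]X^\dagger:\ M_k\in\mathcal B(\mathbb C^{m_k})\ \forall k\Big\},$$ where $\mathcal B(\operatorname{Rng}(X))$ is identified with the operators on $\mathcal H$ whose support and range lie in $\operatorname{Rng}(X)$.
   Context: Let $G$ be a group with a unitary representation $g\mapsto U_g$ on a finite-dimensional Hilbert space $\mathcal H$, decomposed as $\mathcal H=\bigoplus_{k\in S}(\mathcal H_k\otimes\mathbb C^{m_k})$, where $S$ is the set of equivalence classes of irreducible components, $\mathcal H_k$ carries the irreducible representation of class $k$ and $m_k$ is its multiplicity, so that $U_g=\bigoplus_k U^{(k)}_g\otimes I_{m_k}$. Let $d_{\mathcal H_k}=\dim\mathcal H_k$, let $P_k$ be the orthogonal projector onto $\mathcal H_k\otimes\mathbb C^{m_k}$, and let $\operatorname{Tr}_{\mathcal H_k}$ be the partial trace $\mathcal B(\mathcal H_k\otimes\mathbb C^{m_k})\to\mathcal B(\mathbb C^{m_k})$. Let $\mathcal C$ be the convex set of operators $\Xi\ge0$ on $\mathcal H$ with $\operatorname{Tr}_{\mathcal H_k}(P_k\Xi P_k)=d_{\mathcal H_k}I_{m_k}$ for all $k\in S$ (the seeds of covariant POVMs $dP_g=U_g^\dagger\Xi U_g\,dg$).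 *)

theory Defs
  imports Complex_Main
begin

text \<open>Concrete model of the decomposition
  H = (direct sum over k in S) H_k (tensor) C^(m k), with dim H_k = d k.
  An orthonormal basis of H is indexed by triples (k, a, j) with k in S,
  a < d k (basis index of H_k) and j < m k (multiplicity index).\<close>

type_synonym idx = "nat \<times> nat \<times> nat"
type_synonym vec = "idx \<Rightarrow> complex"
type_synonym op = "idx \<Rightarrow> idx \<Rightarrow> complex"

definition Idx :: "nat set \<Rightarrow> (nat \<Rightarrow> nat) \<Rightarrow> (nat \<Rightarrow> nat) \<Rightarrow> idx set" where
  "Idx S d m = {(k, a, j). k \<in> S \<and> a < d k \<and> j < m k}"

definition vecs :: "nat set \<Rightarrow> (nat \<Rightarrow> nat) \<Rightarrow> (nat \<Rightarrow> nat) \<Rightarrow> vec set" where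
  "vecs S d m = {v. \<forall>x. x \<notin> Idx S d m \<longrightarrow> v x = 0}"

definition ops :: "nat set \<Rightarrow> (nat \<Rightarrow> nat) \<Rightarrow> (nat \<Rightarrow> nat) \<Rightarrow> op set" where
  "ops S d m = {A. \<forall>x y. x \<notin> Idx S d m \<or> y \<notin> Idx S d m \<longrightarrow> A x y = 0}"

definition op_mult :: "nat set \<Rightarrow> (nat \<Rightarrow> nat) \<Rightarrow> (nat \<Rightarrow> nat) \<Rightarrow> op \<Rightarrow> op \<Rightarrow> op" where
  "op_mult S d m A B = (\<lambda>x y. \<Sum>z\<in>Idx S d m. A x z * B z y)"

definition op_apply :: "nat set \<Rightarrow> (nat \<Rightarrow> nat) \<Rightarrow> (nat \<Rightarrow> nat) \<Rightarrow> op \<Rightarrow> vec \<Rightarrow> vec" where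
  "op_apply S d m A v = (\<lambda>x. \<Sum>y\<in>Idx S d m. A x y * v y)"

definition inner_H :: "nat set \<Rightarrow> (nat \<Rightarrow> nat) \<Rightarrow> (nat \<Rightarrow> nat) \<Rightarrow> vec \<Rightarrow> vec \<Rightarrow> complex" where
  "inner_H S d m v w = (\<Sum>x\<in>Idx S d m. cnj (v x) * w x)"

definition adj :: "op \<Rightarrow> op" where
  "adj A = (\<lambda>x y. cnj (A y x))"

definition psd :: "nat set \<Rightarrow> (nat \<Rightarrow> nat) \<Rightarrow> (nat \<Rightarrow> nat) \<Rightarrow> op \<Rightarrow> bool" where
  "psd S d m A \<longleftrightarrow> A \<in> ops S d m \<and>
     (\<forall>v\<in>vecs S d m. Im (inner_H S d m v (op_apply S d m A v)) = 0
                      \<and> Re (inner_H S d m v (op_apply S d m A v)) \<ge> 0)"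

text \<open>The convex set C of seeds:
  Xi \<ge> 0 and Tr_{H_k}(P_k Xi P_k) = d_k I_{m_k} for all k in S.\<close>
definition seedC :: "nat set \<Rightarrow> (nat \<Rightarrow> nat) \<Rightarrow> (nat \<Rightarrow> nat) \<Rightarrow> op set" where
  "seedC S d m = {Xi. psd S d m Xi \<and>
     (\<forall>k\<in>S. \<forall>j<m k. \<forall>j'<m k.
        (\<Sum>a<d k. Xi (k, a, j) (k, a, j')) = (if j = j' then of_nat (d k) else 0))}"

definition extremal_point :: "op set \<Rightarrow> op \<Rightarrow> bool" where
  "extremal_point K Xi \<longleftrightarrow> Xi \<in> K \<and>
     (\<forall>A\<in>K. \<forall>B\<in>K. \<forall>t::real. 0 < t \<and> t < 1 \<and>
        Xi = (\<lambda>x y. complex_of_real t * A x y + complex_of_real (1 - t) * B x y)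
        \<longrightarrow> A = B)"

text \<open>Range of X and B(Rng X): operators on H whose range lies in Rng X and
  whose support (orthogonal complement of the kernel) lies in Rng X,
  i.e. which vanish on the orthogonal complement of Rng X.\<close>
definition Rng :: "nat set \<Rightarrow> (nat \<Rightarrow> nat) \<Rightarrow> (nat \<Rightarrow> nat) \<Rightarrow> op \<Rightarrow> vec set" where
  "Rng S d m X = op_apply S d m X ` vecs S d m"

definition ops_on_range :: "nat set \<Rightarrow> (nat \<Rightarrow> nat) \<Rightarrow> (nat \<Rightarrow> nat) \<Rightarrow> op \<Rightarrow> op set" where
  "ops_on_range S d m X = {A \<in> ops S d m.
     (\<forall>v\<in>vecs S d m. op_apply S d m A v \<in> Rng S d m X) \<and>
     (\<forall>v\<in>vecs S d m. (\<forall>w\<in>Rng S d m X. inner_H S d m w v = 0)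
                      \<longrightarrow> op_apply S d m A v = (\<lambda>_. 0))}"

text \<open>Block operator (direct sum over k) of I_{H_k} \<otimes> M_k, where M k is an
  m_k x m_k matrix with entries M k j j'.\<close>
definition blockop :: "nat set \<Rightarrow> (nat \<Rightarrow> nat) \<Rightarrow> (nat \<Rightarrow> nat)
    \<Rightarrow> (nat \<Rightarrow> nat \<Rightarrow> nat \<Rightarrow> complex) \<Rightarrow> op" where
  "blockop S d m M = (\<lambda>(k, a, j) (k', a', j').
     if (k, a, j) \<in> Idx S d m \<and> (k', a', j') \<in> Idx S d m \<and> k = k' \<and> a = a'
     then M k j j' else 0)"

definition op_span :: "op set \<Rightarrow> op set" where
  "op_span T = {A. \<exists>n (c :: nat \<Rightarrow> complex) (B :: nat \<Rightarrow> op).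
      (\<forall>i<n. B i \<in> T) \<and> A = (\<lambda>x y. \<Sum>i<n. c i * B i x y)}"

end

theory Submission
  imports Defs
begin

text \<open>Let \<open>V\<close> be the span in the statement; always \<open>V \<subseteq> B(Rng X)\<close>.
  If \<open>\<Xi> = t A + (1 - t) B\<close> with \<open>A, B \<in> C\<close>, then \<open>D = A - B\<close> is Hermitian, has vanishing
  partial traces and, by positivity of \<open>A\<close> and \<open>B\<close>, kills \<open>ker X\<close>; hence \<open>D = X\<^sup>\<dagger> L X\<close>.
  For every \<open>F\<close>, \<open>tr (D F) = tr (L X F X\<^sup>\<dagger>)\<close>; if \<open>B(Rng X) = V\<close>, then \<open>X F X\<^sup>\<dagger>\<close> is a combination
  of operators \<open>X (\<Oplus>\<^sub>k I \<otimes> M\<^sub>k) X\<^sup>\<dagger>\<close>, against which \<open>D\<close> has trace zero, so \<open>D = 0\<close>.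
  Conversely, if \<open>V \<noteq> B(Rng X)\<close>, Hilbert--Schmidt projection onto \<open>V\<close> leaves a nonzero
  \<open>D \<in> B(Rng X)\<close> orthogonal to \<open>V\<close>, which says that \<open>X\<^sup>\<dagger> D X \<noteq> 0\<close> has vanishing partial traces.
  A Hermitian combination \<open>H\<close> of \<open>D\<close> and \<open>D\<^sup>\<dagger>\<close> keeps both properties, and then
  \<open>\<Xi> \<plusminus> \<epsilon> X\<^sup>\<dagger> H X \<in> C\<close> for small \<open>\<epsilon>\<close>, so \<open>\<Xi>\<close> is not extremal.\<close>

definition inner_on :: "'a set \<Rightarrow> ('a \<Rightarrow> complex) \<Rightarrow> ('a \<Rightarrow> complex) \<Rightarrow> complex" where
  "inner_on I u v = (\<Sum>x\<in>I. cnj (u x) * v x)"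

lemma inner_on_diff_right: "inner_on I u (\<lambda>x. v x - w x) = inner_on I u v - inner_on I u w"
  unfolding inner_on_def by (simp add: right_diff_distrib sum_subtractf)

lemma inner_on_scale_right: "inner_on I u (\<lambda>x. c * v x) = c * inner_on I u v"
  unfolding inner_on_def by (simp add: sum_distrib_left mult.left_commute)

lemma inner_on_lincomb_left:
  "inner_on I (\<lambda>x. u x + (\<Sum>l\<in>J. c l * G l x)) w = inner_on I u w + (\<Sum>l\<in>J. cnj (c l) * inner_on I (G l) w)"
  unfolding inner_on_def cnj_sum
  by (simp add: distrib_right sum.distrib sum_distrib_left sum_distrib_right mult.assoc sum.swap[of _ I])

lemma inner_on_self: "inner_on I u u = of_real (\<Sum>x\<in>I. (cmod (u x))\<^sup>2)"
  unfolding inner_on_def of_real_sum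
  by (intro sum.cong refl) (simp only: complex_norm_square mult.commute)

lemma inner_on_self_eq_0:
  assumes "finite I" and "inner_on I u u = 0" and "x \<in> I"
  shows "u x = 0"
proof -
  have "(\<Sum>x\<in>I. (cmod (u x))\<^sup>2) = 0"
    using assms(2) unfolding inner_on_self by (simp only: of_real_eq_0_iff)
  with assms(1,3) show ?thesis by (simp add: sum_nonneg_eq_0_iff)
qed

lemma orthogonal_residual_exists:
  assumes "finite I" and "finite J"
  shows "\<exists>c. \<forall>i\<in>J. inner_on I (G i) (\<lambda>x. A x - (\<Sum>l\<in>J. c l * G l x)) = 0"
  using assms(2)
proof (induction J arbitrary: A rule: finite_induct)
  case empty
  show ?case by simp
next
  case (insert j J)
  obtain cA where cA: "\<forall>i\<in>J. inner_on I (G i) (\<lambda>x. A x - (\<Sum>l\<in>J. cA l * G l x)) = 0"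
    using insert.IH by blast
  obtain cG where cG: "\<forall>i\<in>J. inner_on I (G i) (\<lambda>x. G j x - (\<Sum>l\<in>J. cG l * G l x)) = 0"
    using insert.IH by blast
  define r where "r x = A x - (\<Sum>l\<in>J. cA l * G l x)" for x
  define u where "u x = G j x - (\<Sum>l\<in>J. cG l * G l x)" for x
  define \<alpha> where "\<alpha> = inner_on I u r / inner_on I u u"
  define c where "c l = (if l = j then \<alpha> else cA l - \<alpha> * cG l)" for l
  have residual: "(\<lambda>x. A x - (\<Sum>l\<in>insert j J. c l * G l x)) = (\<lambda>x. r x - \<alpha> * u x)"
  proof
    fix x
    have "(\<Sum>l\<in>J. c l * G l x) = (\<Sum>l\<in>J. cA l * G l x) - \<alpha> * (\<Sum>l\<in>J. cG l * G l x)"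
      using insert.hyps unfolding c_def sum_distrib_left sum_subtractf[symmetric]
      by (intro sum.cong) (auto simp: algebra_simps)
    then show "A x - (\<Sum>l\<in>insert j J. c l * G l x) = r x - \<alpha> * u x"
      using insert.hyps unfolding r_def u_def by (simp add: c_def algebra_simps)
  qed
  have orth_J: "inner_on I (G i) (\<lambda>x. r x - \<alpha> * u x) = 0" if "i \<in> J" for i
    using cA cG that unfolding r_def u_def by (simp add: inner_on_diff_right inner_on_scale_right)
  have orth_u: "inner_on I u (\<lambda>x. r x - \<alpha> * u x) = 0"
  proof (cases "inner_on I u u = 0")
    case True
    then have "\<forall>x\<in>I. u x = 0" using inner_on_self_eq_0[OF assms(1)] by blast
    then have "inner_on I u r = 0" unfolding inner_on_def by simp
    with True show ?thesis by (simp add: inner_on_diff_right inner_on_scale_right)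
  next
    case False
    then show ?thesis unfolding inner_on_diff_right inner_on_scale_right \<alpha>_def by simp
  qed
  have "G j = (\<lambda>x. u x + (\<Sum>l\<in>J. cG l * G l x))" unfolding u_def by simp
  then have "inner_on I (G j) (\<lambda>x. r x - \<alpha> * u x) = 0"
    using orth_u orth_J by (simp add: inner_on_lincomb_left)
  with orth_J have "\<forall>i\<in>insert j J. inner_on I (G i) (\<lambda>x. A x - (\<Sum>l\<in>insert j J. c l * G l x)) = 0"
    unfolding residual by blast
  then show ?case by blast
qed

lemma linear_coeff_eq_0_if_quadratic_nonneg:
  fixes b c :: real
  assumes nonneg: "\<And>s. 0 \<le> b * s + c * s\<^sup>2"
  shows "b = 0"
proof (rule ccontr)
  assume "b \<noteq> 0"
  define s where "s = - b / (\<bar>c\<bar> + 1)"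
  have "\<bar>c\<bar> + 1 \<noteq> 0" by linarith
  then have "b * s + c * s\<^sup>2 = - b\<^sup>2 * (\<bar>c\<bar> + 1 - c) / (\<bar>c\<bar> + 1)\<^sup>2"
    unfolding s_def by (simp add: divide_simps power2_eq_square) (simp add: algebra_simps)
  also have "\<dots> < 0"
    using \<open>b \<noteq> 0\<close> by (intro divide_neg_pos mult_neg_pos) auto
  finally show False using nonneg[of s] by simp
qed

lemma sum_if_const: "(\<Sum>x\<in>A. if P then f x else 0) = (if P then sum f A else 0)"
  by simp

lemma op_span_sum:
  assumes "finite J" and "\<forall>i\<in>J. B i \<in> T"
  shows "(\<lambda>x y. \<Sum>i\<in>J. c i * B i x y) \<in> op_span T"
proof -
  obtain h where h: "bij_betw h {..<card J} J"
    using ex_bij_betw_nat_finite[OF assms(1)] lessThan_atLeast0 by metis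
  have "(\<lambda>x y. \<Sum>i\<in>J. c i * B i x y) = (\<lambda>x y. \<Sum>n<card J. c (h n) * B (h n) x y)"
    by (simp add: sum.reindex_bij_betw[OF h, symmetric])
  moreover have "\<forall>n<card J. B (h n) \<in> T" using assms(2) h by (auto dest: bij_betwE)
  ultimately show ?thesis
    unfolding op_span_def mem_Collect_eq
    by (intro exI[of _ "card J"] exI[of _ "\<lambda>n. c (h n)"] exI[of _ "\<lambda>n. B (h n)"]) simp
qed

definition basis_vec :: "idx \<Rightarrow> vec" where
  "basis_vec y = (\<lambda>x. of_bool (x = y))"

definition matrix_unit :: "nat \<Rightarrow> nat \<Rightarrow> nat \<Rightarrow> nat \<Rightarrow> nat \<Rightarrow> nat \<Rightarrow> complex" where
  "matrix_unit k j j' = (\<lambda>k0 b b'. of_bool (k0 = k \<and> b = j \<and> b' = j'))"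

locale finite_isotypic =
  fixes S :: "nat set" and d m :: "nat \<Rightarrow> nat"
  assumes finite_S: "finite S"
begin

abbreviation "I \<equiv> Idx S d m"
abbreviation "Ops \<equiv> ops S d m"
abbreviation "Vecs \<equiv> vecs S d m"
abbreviation "mul \<equiv> op_mult S d m"
abbreviation "app \<equiv> op_apply S d m"
abbreviation "inn \<equiv> inner_H S d m"

definition tr :: "op \<Rightarrow> complex" where
  "tr A = (\<Sum>x\<in>I. A x x)"

lemma Idx_eq_Sigma: "I = Sigma S (\<lambda>k. {..<d k} \<times> {..<m k})"
  unfolding Idx_def by auto

lemma finite_I: "finite I"
  unfolding Idx_eq_Sigma using finite_S by auto

lemma sum_Idx: "sum f I = (\<Sum>k\<in>S. \<Sum>a<d k. \<Sum>j<m k. f (k, a, j))"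
  unfolding Idx_eq_Sigma using finite_S by (simp add: sum.Sigma sum.cartesian_product)

lemma opsD: "A \<in> Ops \<Longrightarrow> x \<notin> I \<or> y \<notin> I \<Longrightarrow> A x y = 0"
  unfolding ops_def by blast

lemma vecsD: "v \<in> Vecs \<Longrightarrow> x \<notin> I \<Longrightarrow> v x = 0"
  unfolding vecs_def by blast

lemma ops_eqI:
  assumes "A \<in> Ops" and "B \<in> Ops" and "\<And>x y. x \<in> I \<Longrightarrow> y \<in> I \<Longrightarrow> A x y = B x y"
  shows "A = B"
  using assms by (intro ext) (metis opsD)

lemma vecs_eqI:
  assumes "u \<in> Vecs" and "v \<in> Vecs" and "\<And>x. x \<in> I \<Longrightarrow> u x = v x"
  shows "u = v"
  using assms by (intro ext) (metis vecsD)

lemma zero_ops: "(\<lambda>x y. 0) \<in> Ops"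
  by (simp add: ops_def)

lemma zero_vecs: "(\<lambda>x. 0) \<in> Vecs"
  by (simp add: vecs_def)

lemma mul_ops: "A \<in> Ops \<Longrightarrow> B \<in> Ops \<Longrightarrow> mul A B \<in> Ops"
  unfolding op_mult_def by (subst ops_def) (auto simp: opsD)

lemma adj_ops: "A \<in> Ops \<Longrightarrow> adj A \<in> Ops"
  unfolding ops_def adj_def by auto

lemma app_vecs: "A \<in> Ops \<Longrightarrow> app A v \<in> Vecs"
  unfolding op_apply_def by (subst vecs_def) (auto simp: opsD)

lemma lincomb_ops: "A \<in> Ops \<Longrightarrow> B \<in> Ops \<Longrightarrow> (\<lambda>x y. a * A x y + b * B x y) \<in> Ops"
  by (subst ops_def) (auto simp: opsD)

lemma lincomb_vecs: "u \<in> Vecs \<Longrightarrow> v \<in> Vecs \<Longrightarrow> (\<lambda>x. a * u x + b * v x) \<in> Vecs"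
  by (subst vecs_def) (auto simp: vecsD)

lemma diff_ops: "A \<in> Ops \<Longrightarrow> B \<in> Ops \<Longrightarrow> (\<lambda>x y. A x y - B x y) \<in> Ops"
  by (subst ops_def) (auto simp: opsD)

lemma basis_vec_vecs: "y \<in> I \<Longrightarrow> basis_vec y \<in> Vecs"
  unfolding basis_vec_def by (subst vecs_def) auto

lemma blockop_ops: "blockop S d m M \<in> Ops"
  unfolding blockop_def by (subst ops_def) (auto split: prod.splits)

lemma adj_adj [simp]: "adj (adj A) = A"
  unfolding adj_def by simp

lemma adj_mul: "adj (mul A B) = mul (adj B) (adj A)"
  unfolding op_mult_def adj_def by (simp add: mult.commute)

lemma adj_diff: "adj (\<lambda>x y. A x y - B x y) = (\<lambda>x y. adj A x y - adj B x y)"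
  unfolding adj_def by simp

lemma adj_blockop_matrix_unit: "adj (blockop S d m (matrix_unit k j j')) = blockop S d m (matrix_unit k j' j)"
  unfolding adj_def blockop_def matrix_unit_def by (intro ext) (auto split: prod.splits)

lemma mul_assoc: "mul (mul A B) C = mul A (mul B C)"
  unfolding op_mult_def sum_distrib_left sum_distrib_right
  by (intro ext, subst sum.swap) (simp add: mult.assoc)

lemma zero_mul: "mul (\<lambda>x y. 0) B = (\<lambda>x y. 0)"
  unfolding op_mult_def by simp

lemma mul_zero: "mul A (\<lambda>x y. 0) = (\<lambda>x y. 0)"
  unfolding op_mult_def by simp

lemma app_mul: "app (mul A B) v = app A (app B v)"
  unfolding op_mult_def op_apply_def sum_distrib_left sum_distrib_right
  by (intro ext, subst sum.swap) (simp add: mult.assoc)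

lemma app_zero: "app A (\<lambda>x. 0) = (\<lambda>x. 0)"
  unfolding op_apply_def by simp

lemma app_column: "app A (\<lambda>z. B z y) = (\<lambda>x. mul A B x y)"
  unfolding op_apply_def op_mult_def ..

lemma app_basis_vec: "y \<in> I \<Longrightarrow> app A (basis_vec y) = (\<lambda>x. A x y)"
  unfolding op_apply_def basis_vec_def by (auto simp: finite_I Int_def Collect_conv_if)

lemma app_lincomb_left: "app (\<lambda>x y. a * A x y + b * B x y) v = (\<lambda>x. a * app A v x + b * app B v x)"
  unfolding op_apply_def by (simp add: algebra_simps sum.distrib sum_distrib_left)

lemma app_lincomb_right: "app A (\<lambda>z. a * u z + b * w z) = (\<lambda>x. a * app A u x + b * app A w x)"
  unfolding op_apply_def by (simp add: algebra_simps sum.distrib sum_distrib_left)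

lemma app_diff_left: "app (\<lambda>x y. A x y - B x y) v = (\<lambda>x. app A v x - app B v x)"
  unfolding op_apply_def by (simp add: left_diff_distrib sum_subtractf)

lemma sandwich_lincomb:
  "mul (mul L (\<lambda>x y. a * A x y + b * B x y)) R
    = (\<lambda>x y. a * mul (mul L A) R x y + b * mul (mul L B) R x y)"
  unfolding op_mult_def by (simp add: algebra_simps sum.distrib sum_distrib_left sum_distrib_right)

lemma inner_H_eq_inner_on: "inn = inner_on I"
  unfolding inner_H_def inner_on_def ..

lemma inner_basis_vec: "inn (basis_vec x) w = w x" if "x \<in> I"
proof -
  have "cnj (basis_vec x y) = basis_vec x y" for y
    unfolding basis_vec_def by simp
  then show ?thesis
    using that unfolding inner_H_def by (simp add: basis_vec_def finite_I Int_def Collect_conv_if)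
qed

lemma inner_adj: "inn u (app (adj A) w) = inn (app A u) w"
  unfolding inner_H_def op_apply_def adj_def sum_distrib_left sum_distrib_right
  by (subst sum.swap) (simp add: mult_ac sum_distrib_left)

lemma inner_cnj: "inn u w = cnj (inn w u)"
  unfolding inner_H_def by (simp add: mult.commute)

lemma inner_lincomb_right: "inn u (\<lambda>x. a * v x + b * w x) = a * inn u v + b * inn u w"
  unfolding inner_H_def by (simp add: algebra_simps sum.distrib sum_distrib_left)

lemma quadratic_form_lincomb:
  "inn (\<lambda>z. a * u z + b * w z) (app A (\<lambda>z. a * u z + b * w z))
    = cnj a * a * inn u (app A u) + cnj a * b * inn u (app A w)
      + cnj b * a * inn w (app A u) + cnj b * b * inn w (app A w)"
  unfolding app_lincomb_right unfolding inner_H_def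
  by (simp add: algebra_simps sum.distrib sum_distrib_left)

lemma hermitian_quadratic_form_real:
  assumes "adj H = H"
  shows "Im (inn w (app H w)) = 0"
proof -
  have "inn w (app H w) = cnj (inn w (app H w))"
    using inner_adj[of w H w] inner_cnj[of "app H w" w] assms by simp
  then show ?thesis by (simp add: complex_eq_iff)
qed

lemma quadratic_form_bound:
  "cmod (inn w (app H w)) \<le> (\<Sum>x\<in>I. \<Sum>y\<in>I. cmod (H x y)) * (\<Sum>x\<in>I. (cmod (w x))\<^sup>2)"
proof -
  define N where "N = (\<Sum>x\<in>I. (cmod (w x))\<^sup>2)"
  have sq: "(cmod (w x))\<^sup>2 \<le> N" if "x \<in> I" for x
    unfolding N_def using that finite_I by (intro member_le_sum) auto
  have prod: "cmod (w x) * cmod (w y) \<le> N" if "x \<in> I" "y \<in> I" for x y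
  proof -
    have "2 * (cmod (w x) * cmod (w y)) \<le> (cmod (w x))\<^sup>2 + (cmod (w y))\<^sup>2"
      using sum_squares_bound[of "cmod (w x)" "cmod (w y)"] by (simp add: power2_eq_square algebra_simps)
    then show ?thesis using sq[OF that(1)] sq[OF that(2)] by linarith
  qed
  have "cmod (inn w (app H w)) = cmod (\<Sum>x\<in>I. \<Sum>y\<in>I. cnj (w x) * (H x y * w y))"
    unfolding inner_H_def op_apply_def by (simp add: sum_distrib_left)
  also have "\<dots> \<le> (\<Sum>x\<in>I. \<Sum>y\<in>I. cmod (cnj (w x) * (H x y * w y)))"
    by (intro order.trans[OF norm_sum] sum_mono norm_sum)
  also have "\<dots> \<le> (\<Sum>x\<in>I. \<Sum>y\<in>I. cmod (H x y) * N)"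
  proof (intro sum_mono)
    fix x y assume "x \<in> I" "y \<in> I"
    then have "cmod (H x y) * (cmod (w x) * cmod (w y)) \<le> cmod (H x y) * N"
      using prod by (intro mult_left_mono) auto
    then show "cmod (cnj (w x) * (H x y * w y)) \<le> cmod (H x y) * N"
      by (simp add: norm_mult algebra_simps)
  qed
  also have "\<dots> = (\<Sum>x\<in>I. \<Sum>y\<in>I. cmod (H x y)) * N" by (simp add: sum_distrib_right)
  finally show ?thesis unfolding N_def .
qed

subsection \<open>Positive operators\<close>

lemma psd_ops: "psd S d m A \<Longrightarrow> A \<in> Ops"
  unfolding psd_def by blast

text \<open>Polarization: a form with real values on all \<open>e\<^sub>x + c e\<^sub>y\<close> is Hermitian.\<close>
lemma psd_hermitian:
  assumes psd: "psd S d m A"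
  shows "adj A = A"
proof (rule ops_eqI[OF adj_ops[OF psd_ops[OF psd]] psd_ops[OF psd]])
  fix x y assume x: "x \<in> I" and y: "y \<in> I"
  have real: "Im (A p p + c * A p q + cnj c * A q p + cnj c * c * A q q) = 0"
    if "p \<in> I" "q \<in> I" for p q c
  proof -
    have "(\<lambda>z. 1 * basis_vec p z + c * basis_vec q z) \<in> Vecs"
      using that by (intro lincomb_vecs basis_vec_vecs)
    then have "Im (inn (\<lambda>z. 1 * basis_vec p z + c * basis_vec q z)
                      (app A (\<lambda>z. 1 * basis_vec p z + c * basis_vec q z))) = 0"
      using psd unfolding psd_def by blast
    then show ?thesis
      unfolding quadratic_form_lincomb using that by (simp add: app_basis_vec inner_basis_vec)
  qed
  have "Im (A x x) = 0" "Im (A y y) = 0"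
    using real[OF x y, of 0] real[OF y x, of 0] by simp_all
  moreover have "Im (A x x + A x y + A y x + A y y) = 0" using real[OF x y, of 1] by simp
  moreover have "Im (A x x + \<i> * A x y - \<i> * A y x + A y y) = 0" using real[OF x y, of "\<i>"] by simp
  ultimately show "adj A x y = A x y" unfolding adj_def by (simp add: complex_eq_iff)
qed

lemma psd_null:
  assumes psd: "psd S d m A" and v: "v \<in> Vecs" and null: "inn v (app A v) = 0"
  shows "app A v = (\<lambda>x. 0)"
proof -
  define w where "w = app A v"
  have w: "w \<in> Vecs" unfolding w_def by (rule app_vecs[OF psd_ops[OF psd]])
  have "inn v (app A w) = inn w w"
    using inner_adj[of v A w] unfolding psd_hermitian[OF psd] w_def .
  moreover have "inn w (app A v) = inn w w" unfolding w_def ..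
  moreover have "0 \<le> Re (inn (\<lambda>z. 1 * v z + of_real s * w z) (app A (\<lambda>z. 1 * v z + of_real s * w z)))"
    for s :: real
    using psd lincomb_vecs[OF v w] unfolding psd_def by blast
  ultimately have "0 \<le> (2 * Re (inn w w)) * s + Re (inn w (app A w)) * s\<^sup>2" for s :: real
    unfolding quadratic_form_lincomb null by (simp add: power2_eq_square mult_ac)
  then have "Re (inn w w) = 0" using linear_coeff_eq_0_if_quadratic_nonneg by fastforce
  then have "inner_on I w w = 0" unfolding inner_H_eq_inner_on inner_on_self by simp
  then have "\<forall>x\<in>I. w x = 0" using inner_on_self_eq_0[OF finite_I] by blast
  then show ?thesis unfolding w_def[symmetric] using w by (intro vecs_eqI zero_vecs) auto
qed

lemma psd_convex_comb_null:
  assumes A: "psd S d m A" and B: "psd S d m B" and t: "0 < t" "t < 1" and v: "v \<in> Vecs"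
    and null: "inn v (app (\<lambda>x y. of_real t * A x y + of_real (1 - t) * B x y) v) = 0"
  shows "app A v = (\<lambda>x. 0)" and "app B v = (\<lambda>x. 0)"
proof -
  define a b where "a = inn v (app A v)" and "b = inn v (app B v)"
  have "Im a = 0" "0 \<le> Re a" "Im b = 0" "0 \<le> Re b"
    using A B v unfolding psd_def a_def b_def by auto
  moreover have "of_real t * a + of_real (1 - t) * b = 0"
    using null unfolding app_lincomb_left inner_lincomb_right a_def b_def .
  ultimately have "a = 0" "b = 0"
    using t by (auto simp: complex_eq_iff add_nonneg_eq_0_iff)
  then show "app A v = (\<lambda>x. 0)" and "app B v = (\<lambda>x. 0)"
    unfolding a_def b_def using psd_null[OF A v] psd_null[OF B v] by blast+
qed

subsection \<open>Projection onto the support\<close>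

text \<open>\<open>P = Y\<^sup>\<dagger> W\<close> is the orthogonal projection onto \<open>(ker Y)\<^sup>\<bottom>\<close>: column \<open>y\<close> of \<open>P\<close> is the
  Gram--Schmidt projection of \<open>e\<^sub>y\<close> onto the span of the conjugated rows of \<open>Y\<close>.\<close>
lemma range_projection_exists:
  assumes Y: "Y \<in> Ops"
  obtains W where "W \<in> Ops" and "adj (mul (adj Y) W) = mul (adj Y) W" and "mul Y (mul (adj Y) W) = Y"
proof -
  define G where "G i = (\<lambda>z. cnj (Y i z))" for i
  define c where "c y = (SOME c. \<forall>i\<in>I.
      inner_on I (G i) (\<lambda>z. basis_vec y z - (\<Sum>l\<in>I. c l * G l z)) = 0)" for y
  have c: "\<forall>i\<in>I. inner_on I (G i) (\<lambda>z. basis_vec y z - (\<Sum>l\<in>I. c y l * G l z)) = 0" for y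
    unfolding c_def by (rule someI_ex[OF orthogonal_residual_exists[OF finite_I finite_I]])
  define W where "W = (\<lambda>l y. if l \<in> I \<and> y \<in> I then c y l else 0)"
  have W: "W \<in> Ops" unfolding W_def by (subst ops_def) auto
  define P where "P = mul (adj Y) W"
  have "mul Y P x y = Y x y" if x: "x \<in> I" and y: "y \<in> I" for x y
  proof -
    have P_col: "P z y = (\<Sum>l\<in>I. c y l * G l z)" for z
      unfolding P_def op_mult_def adj_def W_def G_def using y
      by (intro sum.cong refl) (simp add: mult.commute)
    have "(\<Sum>z\<in>I. Y x z * (basis_vec y z - P z y)) = 0"
      using c x unfolding inner_on_def G_def P_col by simp
    then have "(\<Sum>z\<in>I. Y x z * P z y) = (\<Sum>z\<in>I. Y x z * basis_vec y z)"
      by (simp add: right_diff_distrib sum_subtractf)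
    also have "\<dots> = Y x y"
      using app_basis_vec[OF y, of Y] unfolding op_apply_def by meson
    finally show ?thesis unfolding op_mult_def[of S d m Y] .
  qed
  then have YP: "mul Y P = Y"
    unfolding P_def by (intro ops_eqI mul_ops adj_ops Y W) auto
  then have "mul (adj P) (adj Y) = adj Y" by (metis adj_mul)
  then have "mul (adj P) P = P" unfolding P_def by (simp add: mul_assoc[symmetric])
  then have "adj P = P" by (metis adj_adj adj_mul)
  with that W YP show thesis unfolding P_def by blast
qed

lemma mul_eq_of_kernel_subset:
  assumes Y: "Y \<in> Ops" and C: "C \<in> Ops" and P: "P \<in> Ops" and YP: "mul Y P = Y"
    and ker: "\<And>v. v \<in> Vecs \<Longrightarrow> app Y v = (\<lambda>x. 0) \<Longrightarrow> app C v = (\<lambda>x. 0)"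
  shows "mul C P = C"
proof (rule ops_eqI[OF mul_ops[OF C P] C])
  fix x y assume x: "x \<in> I" and y: "y \<in> I"
  define v where "v z = basis_vec y z - P z y" for z
  have app_v: "app A v = (\<lambda>x. A x y - mul A P x y)" for A
  proof -
    have "app A v = (\<lambda>x. app A (basis_vec y) x - app A (\<lambda>z. P z y) x)"
      unfolding v_def op_apply_def by (simp add: right_diff_distrib sum_subtractf)
    then show ?thesis unfolding app_column app_basis_vec[OF y] .
  qed
  have "v \<in> Vecs" unfolding v_def using y by (subst vecs_def) (auto simp: opsD[OF P] basis_vec_def)
  moreover have "app Y v = (\<lambda>x. 0)" unfolding app_v YP by simp
  ultimately have "app C v = (\<lambda>x. 0)" by (rule ker)
  then show "mul C P x y = C x y" unfolding app_v by (metis eq_iff_diff_eq_0)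
qed

lemma sandwich_by_range_projection:
  assumes Y: "Y \<in> Ops" and A: "A \<in> Ops"
    and ker: "\<And>v. v \<in> Vecs \<Longrightarrow> app Y v = (\<lambda>x. 0) \<Longrightarrow> app A v = (\<lambda>x. 0)"
    and ker_adj: "\<And>v. v \<in> Vecs \<Longrightarrow> app Y v = (\<lambda>x. 0) \<Longrightarrow> app (adj A) v = (\<lambda>x. 0)"
  obtains W where "W \<in> Ops" and "mul (adj W) Y = mul (adj Y) W"
    and "A = mul (mul (mul (adj Y) W) A) (mul (adj Y) W)"
proof -
  obtain W where W: "W \<in> Ops" and herm: "adj (mul (adj Y) W) = mul (adj Y) W"
    and YP: "mul Y (mul (adj Y) W) = Y"
    by (rule range_projection_exists[OF Y])
  define P where "P = mul (adj Y) W"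
  have P: "P \<in> Ops" unfolding P_def by (intro mul_ops adj_ops Y W)
  have "mul A P = A" using mul_eq_of_kernel_subset[OF Y A P] YP ker unfolding P_def by blast
  moreover have "mul (adj A) P = adj A"
    using mul_eq_of_kernel_subset[OF Y adj_ops[OF A] P] YP ker_adj unfolding P_def by blast
  then have "mul P A = A" using herm unfolding P_def by (metis adj_adj adj_mul)
  ultimately have "A = mul (mul P A) P" by simp
  moreover have "mul (adj W) Y = P" using herm unfolding P_def by (metis adj_adj adj_mul)
  ultimately show thesis using that W unfolding P_def by blast
qed

subsection \<open>Operators on the range of \<open>X\<close>\<close>

abbreviation "range_ops X \<equiv> ops_on_range S d m X"

lemma orthogonal_Rng_iff:
  assumes X: "X \<in> Ops" and v: "v \<in> Vecs"
  shows "(\<forall>w\<in>Rng S d m X. inn w v = 0) \<longleftrightarrow> app (adj X) v = (\<lambda>x. 0)"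
proof
  assume orth: "\<forall>w\<in>Rng S d m X. inn w v = 0"
  show "app (adj X) v = (\<lambda>x. 0)"
  proof (rule vecs_eqI[OF app_vecs[OF adj_ops[OF X]] zero_vecs])
    fix x assume x: "x \<in> I"
    have "app X (basis_vec x) \<in> Rng S d m X" unfolding Rng_def using basis_vec_vecs[OF x] by blast
    then have "inn (basis_vec x) (app (adj X) v) = 0" using orth by (simp add: inner_adj)
    then show "app (adj X) v x = 0" by (simp add: inner_basis_vec[OF x])
  qed
next
  assume Xv: "app (adj X) v = (\<lambda>x. 0)"
  show "\<forall>w\<in>Rng S d m X. inn w v = 0"
  proof
    fix w assume "w \<in> Rng S d m X"
    then obtain u where "w = app X u" unfolding Rng_def by blast
    then have "inn w v = inn u (app (adj X) v)" by (simp add: inner_adj)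
    then show "inn w v = 0" by (simp add: Xv inner_H_def)
  qed
qed

lemma range_ops_kernel:
  assumes X: "X \<in> Ops" and A: "A \<in> range_ops X" and v: "v \<in> Vecs"
    and Xv: "app (adj X) v = (\<lambda>x. 0)"
  shows "app A v = (\<lambda>x. 0)" and "app (adj A) v = (\<lambda>x. 0)"
proof -
  have orth: "\<forall>w\<in>Rng S d m X. inn w v = 0" using orthogonal_Rng_iff[OF X v] Xv by blast
  then show "app A v = (\<lambda>x. 0)" using A v unfolding ops_on_range_def by blast
  have A_ops: "A \<in> Ops" using A unfolding ops_on_range_def by blast
  show "app (adj A) v = (\<lambda>x. 0)"
  proof (rule vecs_eqI[OF app_vecs[OF adj_ops[OF A_ops]] zero_vecs])
    fix x assume x: "x \<in> I"
    have "app A (basis_vec x) \<in> Rng S d m X"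
      using A basis_vec_vecs[OF x] unfolding ops_on_range_def by blast
    then have "inn (basis_vec x) (app (adj A) v) = 0" using orth by (simp add: inner_adj)
    then show "app (adj A) v x = 0" by (simp add: inner_basis_vec[OF x])
  qed
qed

lemma sandwich_in_range_ops:
  assumes X: "X \<in> Ops" and F: "F \<in> Ops"
  shows "mul (mul X F) (adj X) \<in> range_ops X"
proof -
  have "app (mul (mul X F) (adj X)) v = app X (app (mul F (adj X)) v)" for v
    by (simp add: mul_assoc app_mul)
  moreover have "app (mul F (adj X)) v \<in> Vecs" for v by (intro app_vecs mul_ops adj_ops X F)
  ultimately have "app (mul (mul X F) (adj X)) v \<in> Rng S d m X" for v
    unfolding Rng_def by auto
  moreover have "app (mul (mul X F) (adj X)) v = (\<lambda>x. 0)"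
    if "v \<in> Vecs" and "\<forall>w\<in>Rng S d m X. inn w v = 0" for v
    using that orthogonal_Rng_iff[OF X] by (simp add: app_mul app_zero)
  ultimately show ?thesis
    unfolding ops_on_range_def by (blast intro: mul_ops adj_ops X F)
qed

lemma range_ops_lincomb:
  assumes A: "A \<in> range_ops X" and B: "B \<in> range_ops X"
  shows "(\<lambda>x y. a * A x y + b * B x y) \<in> range_ops X"
proof -
  have "app (\<lambda>x y. a * A x y + b * B x y) v \<in> Rng S d m X" if v: "v \<in> Vecs" for v
  proof -
    obtain u w where u: "u \<in> Vecs" "app A v = app X u" and w: "w \<in> Vecs" "app B v = app X w"
      using A B v unfolding ops_on_range_def Rng_def by blast
    have "app (\<lambda>x y. a * A x y + b * B x y) v = app X (\<lambda>z. a * u z + b * w z)"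
      unfolding app_lincomb_left app_lincomb_right u w ..
    then show ?thesis unfolding Rng_def using lincomb_vecs[OF u(1) w(1)] by blast
  qed
  with A B show ?thesis
    unfolding ops_on_range_def by (auto simp: app_lincomb_left lincomb_ops)
qed

lemma range_ops_sum:
  assumes "finite J" and "\<forall>i\<in>J. B i \<in> range_ops X"
  shows "(\<lambda>x y. \<Sum>i\<in>J. c i * B i x y) \<in> range_ops X"
  using assms
proof (induction J rule: finite_induct)
  case empty
  have "(\<lambda>x. 0) \<in> Rng S d m X" unfolding Rng_def using zero_vecs app_zero by (metis image_eqI)
  then show ?case unfolding ops_on_range_def by (simp add: zero_ops op_apply_def)
next
  case (insert j J)
  then have "(\<lambda>x y. c j * B j x y + 1 * (\<Sum>i\<in>J. c i * B i x y)) \<in> range_ops X"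
    by (intro range_ops_lincomb) auto
  with insert.hyps show ?case by simp
qed

abbreviation "block_span X \<equiv> op_span {mul (mul X (blockop S d m M)) (adj X) | M. True}"

lemma op_span_subset_range_ops:
  assumes "T \<subseteq> range_ops X"
  shows "op_span T \<subseteq> range_ops X"
  using assms range_ops_sum[of "{..<_}"] unfolding op_span_def by blast

subsection \<open>Partial traces\<close>

text \<open>\<open>ptrace D k j j'\<close> is the \<open>(j, j')\<close> entry of \<open>Tr\<^bsub>H\<^sub>k\<^esub> (P\<^sub>k D P\<^sub>k)\<close>.\<close>
definition ptrace :: "op \<Rightarrow> nat \<Rightarrow> nat \<Rightarrow> nat \<Rightarrow> complex" where
  "ptrace D k j j' = (\<Sum>a<d k. D (k, a, j) (k, a, j'))"

definition partial_traces_vanish :: "op \<Rightarrow> bool" where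
  "partial_traces_vanish D \<longleftrightarrow> (\<forall>k\<in>S. \<forall>j<m k. \<forall>j'<m k. ptrace D k j j' = 0)"

lemma blockop_Idx:
  assumes "k \<in> S" "a < d k" "j < m k" "k' \<in> S" "a' < d k'" "j' < m k'"
  shows "blockop S d m M (k, a, j) (k', a', j') = (if k = k' \<and> a = a' then M k j j' else 0)"
  using assms unfolding blockop_def Idx_def by auto

lemma trace_mul_blockop:
  "tr (mul D (blockop S d m M)) = (\<Sum>k\<in>S. \<Sum>j<m k. \<Sum>j'<m k. M k j' j * ptrace D k j j')"
proof -
  have "tr (mul D (blockop S d m M))
      = (\<Sum>k\<in>S. \<Sum>a<d k. \<Sum>j<m k. \<Sum>k'\<in>S. \<Sum>a'<d k'. \<Sum>j'<m k'.
           D (k, a, j) (k', a', j') * blockop S d m M (k', a', j') (k, a, j))"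
    unfolding tr_def op_mult_def sum_Idx ..
  also have "\<dots> = (\<Sum>k\<in>S. \<Sum>a<d k. \<Sum>j<m k. \<Sum>j'<m k. D (k, a, j) (k, a, j') * M k j' j)"
  proof (intro sum.cong[OF refl])
    fix k a j assume k: "k \<in> S" and a: "a \<in> {..<d k}" and j: "j \<in> {..<m k}"
    have "(\<Sum>k'\<in>S. \<Sum>a'<d k'. \<Sum>j'<m k'. D (k, a, j) (k', a', j') * blockop S d m M (k', a', j') (k, a, j))
        = (\<Sum>k'\<in>S. \<Sum>a'<d k'. \<Sum>j'<m k'.
             if k' = k then if a' = a then D (k, a, j) (k', a', j') * M k' j' j else 0 else 0)"
      using k a j by (intro sum.cong refl) (simp add: blockop_Idx)
    also have "\<dots> = (\<Sum>j'<m k. D (k, a, j) (k, a, j') * M k j' j)"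
      using finite_S k a by (simp only: sum_if_const) simp
    finally show "(\<Sum>k'\<in>S. \<Sum>a'<d k'. \<Sum>j'<m k'. D (k, a, j) (k', a', j') * blockop S d m M (k', a', j') (k, a, j))
        = (\<Sum>j'<m k. D (k, a, j) (k, a, j') * M k j' j)" .
  qed
  also have "\<dots> = (\<Sum>k\<in>S. \<Sum>j<m k. \<Sum>j'<m k. M k j' j * ptrace D k j j')"
  proof (rule sum.cong[OF refl])
    fix k
    have "(\<Sum>a<d k. \<Sum>j<m k. \<Sum>j'<m k. D (k, a, j) (k, a, j') * M k j' j)
        = (\<Sum>j<m k. \<Sum>a<d k. \<Sum>j'<m k. D (k, a, j) (k, a, j') * M k j' j)"
      by (rule sum.swap)
    also have "\<dots> = (\<Sum>j<m k. \<Sum>j'<m k. \<Sum>a<d k. D (k, a, j) (k, a, j') * M k j' j)"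
      by (rule sum.cong[OF refl], rule sum.swap)
    finally show "(\<Sum>a<d k. \<Sum>j<m k. \<Sum>j'<m k. D (k, a, j) (k, a, j') * M k j' j)
        = (\<Sum>j<m k. \<Sum>j'<m k. M k j' j * ptrace D k j j')"
      unfolding ptrace_def by (simp add: sum_distrib_left mult.commute)
  qed
  finally show ?thesis .
qed

lemma trace_mul_blockop_matrix_unit:
  assumes "k \<in> S" and "j < m k" and "j' < m k"
  shows "tr (mul D (blockop S d m (matrix_unit k j' j))) = ptrace D k j j'"
proof -
  have "matrix_unit k j' j k0 b' b * p = (if k0 = k then if b = j then if b' = j' then p else 0 else 0 else 0)"
    for k0 b b' and p :: complex
    unfolding matrix_unit_def by simp
  then show ?thesis unfolding trace_mul_blockop
    using assms finite_S by (simp only: sum_if_const) simp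
qed

lemma trace_mul_blockop_eq_0:
  "partial_traces_vanish D \<Longrightarrow> tr (mul D (blockop S d m M)) = 0"
  unfolding trace_mul_blockop partial_traces_vanish_def by simp

lemma tr_comm: "tr (mul A B) = tr (mul B A)"
  unfolding tr_def op_mult_def by (subst sum.swap) (simp add: mult.commute)

lemma trace_sandwich: "tr (mul D (mul (mul X F) (adj X))) = tr (mul (mul (mul (adj X) D) X) F)"
  by (metis mul_assoc tr_comm)

lemma trace_mul_sum: "tr (mul L (\<lambda>x y. \<Sum>i\<in>J. c i * B i x y)) = (\<Sum>i\<in>J. c i * tr (mul L (B i)))"
  unfolding tr_def op_mult_def sum_distrib_left
  by (subst sum.swap, rule sum.cong[OF refl], subst sum.swap) (simp add: mult_ac)

lemma zero_if_trace_orthogonal: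
  assumes D: "D \<in> Ops" and orth: "\<And>F. F \<in> Ops \<Longrightarrow> tr (mul D F) = 0"
  shows "D = (\<lambda>x y. 0)"
proof (rule ops_eqI[OF D zero_ops])
  fix x y assume x: "x \<in> I" and y: "y \<in> I"
  define F where "F = (\<lambda>z w. if z = y \<and> w = x then 1 else 0 :: complex)"
  have "F \<in> Ops" unfolding F_def using x y by (subst ops_def) auto
  moreover have "tr (mul D F) = D x y"
  proof -
    have "D z w * F w z = (if z = x then if w = y then D z w else 0 else 0)" for z w
      unfolding F_def by simp
    then show ?thesis unfolding tr_def op_mult_def
      using x y finite_I by (simp only: sum_if_const) simp
  qed
  ultimately show "D x y = 0" using orth by simp
qed

lemma inner_on_pairs_eq_trace:
  "inner_on (I \<times> I) (case_prod A) (case_prod B) = tr (mul B (adj A))"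
  unfolding inner_on_def tr_def op_mult_def adj_def sum.cartesian_product'
  by (simp add: mult.commute)

lemma seedC_diff_partial_traces_vanish:
  assumes "A \<in> seedC S d m" and "B \<in> seedC S d m"
  shows "partial_traces_vanish (\<lambda>x y. A x y - B x y)"
  using assms unfolding seedC_def partial_traces_vanish_def ptrace_def by (simp add: sum_subtractf)

lemma partial_traces_vanish_hermitian_lincomb:
  assumes "partial_traces_vanish E"
  shows "partial_traces_vanish (\<lambda>x y. w * E x y + cnj w * adj E x y)"
proof -
  have "ptrace (\<lambda>x y. w * E x y + cnj w * adj E x y) k j j'
      = w * ptrace E k j j' + cnj w * cnj (ptrace E k j' j)" for k j j'
    unfolding ptrace_def adj_def by (simp add: sum.distrib sum_distrib_left)
  then show ?thesis using assms unfolding partial_traces_vanish_def by simp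
qed

subsection \<open>Extremal seeds\<close>

lemma sandwich_eq_0_if_range_ops_eq_block_span:
  assumes X: "X \<in> Ops" and L: "L \<in> Ops" and span: "range_ops X = block_span X"
    and pt: "partial_traces_vanish (mul (mul (adj X) L) X)"
  shows "mul (mul (adj X) L) X = (\<lambda>x y. 0)"
proof (rule zero_if_trace_orthogonal)
  show "mul (mul (adj X) L) X \<in> Ops" by (intro mul_ops adj_ops X L)
  fix F assume F: "F \<in> Ops"
  have "mul (mul X F) (adj X) \<in> block_span X"
    using sandwich_in_range_ops[OF X F] span by simp
  then obtain n :: nat and c B where B: "\<forall>i<n. B i \<in> {mul (mul X (blockop S d m M)) (adj X) | M. True}"
    and XFX: "mul (mul X F) (adj X) = (\<lambda>x y. \<Sum>i<n. c i * B i x y)"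
    unfolding op_span_def mem_Collect_eq by blast
  have "tr (mul L (B i)) = 0" if "i < n" for i
  proof -
    obtain M where "B i = mul (mul X (blockop S d m M)) (adj X)" using B \<open>i < n\<close> by blast
    then show ?thesis using trace_mul_blockop_eq_0[OF pt] by (simp add: trace_sandwich)
  qed
  moreover have "tr (mul (mul (mul (adj X) L) X) F) = (\<Sum>i<n. c i * tr (mul L (B i)))"
    unfolding trace_sandwich[symmetric] XFX trace_mul_sum ..
  ultimately show "tr (mul (mul (mul (adj X) L) X) F) = 0" by simp
qed

theorem extremal_if_range_ops_eq_block_span:
  assumes X: "X \<in> Ops" and Xi: "Xi \<in> seedC S d m" and Xi_eq: "Xi = mul (adj X) X"
    and span: "range_ops X = block_span X"
  shows "extremal_point (seedC S d m) Xi"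
  unfolding extremal_point_def
proof (intro conjI Xi ballI allI impI, elim conjE)
  fix A B t assume A: "A \<in> seedC S d m" and B: "B \<in> seedC S d m" and t: "0 < t" "t < 1"
    and comb: "Xi = (\<lambda>x y. complex_of_real t * A x y + complex_of_real (1 - t) * B x y)"
  have psd: "psd S d m A" "psd S d m B" using A B unfolding seedC_def by auto
  define D where "D = (\<lambda>x y. A x y - B x y)"
  have D: "D \<in> Ops" unfolding D_def using psd by (intro diff_ops psd_ops)
  have herm: "adj D = D" unfolding D_def adj_diff using psd by (simp add: psd_hermitian)
  have ker: "app D v = (\<lambda>x. 0)" if "v \<in> Vecs" "app X v = (\<lambda>x. 0)" for v
  proof -
    have "inn v (app Xi v) = 0" using that unfolding Xi_eq app_mul by (simp add: app_zero inner_H_def)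
    then show ?thesis
      using psd_convex_comb_null[OF psd t \<open>v \<in> Vecs\<close>] unfolding D_def app_diff_left comb by simp
  qed
  obtain W where W: "W \<in> Ops" and WX: "mul (adj W) X = mul (adj X) W"
    and D_eq: "D = mul (mul (mul (adj X) W) D) (mul (adj X) W)"
    using sandwich_by_range_projection[OF X D] ker herm by metis
  define L where "L = mul (mul W D) (adj W)"
  have L: "L \<in> Ops" unfolding L_def by (intro mul_ops adj_ops W D)
  have "D = mul (mul (mul (adj X) W) D) (mul (adj W) X)" using D_eq by (simp add: WX)
  then have "D = mul (mul (adj X) L) X" unfolding L_def by (simp add: mul_assoc)
  moreover have "partial_traces_vanish D"
    unfolding D_def by (rule seedC_diff_partial_traces_vanish[OF A B])
  ultimately have "D = (\<lambda>x y. 0)"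
    using sandwich_eq_0_if_range_ops_eq_block_span[OF X L span] by simp
  then show "A = B" unfolding D_def by (simp add: fun_eq_iff)
qed

text \<open>\<open>D\<close> is the Hilbert--Schmidt residual of \<open>A0\<close> against the generators
  \<open>X (blockop (matrix_unit k j j')) X\<^sup>\<dagger>\<close> of the span; orthogonality to them is exactly the
  vanishing of the partial traces of \<open>X\<^sup>\<dagger> D X\<close>.\<close>
lemma exists_partial_trace_free_in_range_ops:
  assumes X: "X \<in> Ops" and A0: "A0 \<in> range_ops X" and A0_notin: "A0 \<notin> block_span X"
  obtains D where "D \<in> range_ops X" and "D \<noteq> (\<lambda>x y. 0)"
    and "partial_traces_vanish (mul (mul (adj X) D) X)"
proof -
  define J where "J = Sigma S (\<lambda>k. {..<m k} \<times> {..<m k})"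
  have J: "finite J" unfolding J_def using finite_S by auto
  define G where "G = (\<lambda>(k, j, j'). mul (mul X (blockop S d m (matrix_unit k j j'))) (adj X))"
  have G_span: "G i \<in> {mul (mul X (blockop S d m M)) (adj X) | M. True}" for i
    unfolding G_def by (auto split: prod.split)
  have G_range: "G i \<in> range_ops X" for i
    using G_span[of i] sandwich_in_range_ops[OF X blockop_ops] by auto
  obtain c where c: "\<forall>i\<in>J. inner_on (I \<times> I) (case_prod (G i))
      (\<lambda>p. case_prod A0 p - (\<Sum>l\<in>J. c l * case_prod (G l) p)) = 0"
    using orthogonal_residual_exists[OF finite_cartesian_product[OF finite_I finite_I] J,
        of "\<lambda>i. case_prod (G i)" "case_prod A0"]
    by blast
  define D where "D = (\<lambda>x y. A0 x y - (\<Sum>l\<in>J. c l * G l x y))"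
  have D_pairs: "case_prod D = (\<lambda>p. case_prod A0 p - (\<Sum>l\<in>J. c l * case_prod (G l) p))"
    unfolding D_def by (simp add: case_prod_beta')
  have "(\<lambda>x y. 1 * A0 x y + (- 1) * (\<Sum>l\<in>J. c l * G l x y)) \<in> range_ops X"
    using G_range by (intro range_ops_lincomb A0 range_ops_sum J) auto
  then have "D \<in> range_ops X" unfolding D_def by simp
  moreover have "D \<noteq> (\<lambda>x y. 0)"
  proof
    assume "D = (\<lambda>x y. 0)"
    then have "A0 = (\<lambda>x y. \<Sum>l\<in>J. c l * G l x y)" unfolding D_def by (simp add: fun_eq_iff)
    also have "\<dots> \<in> block_span X" using G_span by (intro op_span_sum J) auto
    finally show False using A0_notin by contradiction
  qed
  moreover have "partial_traces_vanish (mul (mul (adj X) D) X)"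
    unfolding partial_traces_vanish_def
  proof (intro ballI allI impI)
    fix k j j' assume k: "k \<in> S" and j: "j < m k" and j': "j' < m k"
    have "adj (G (k, j, j')) = mul (mul X (blockop S d m (matrix_unit k j' j))) (adj X)"
      unfolding G_def by (simp add: adj_mul adj_blockop_matrix_unit mul_assoc)
    then have "ptrace (mul (mul (adj X) D) X) k j j'
        = inner_on (I \<times> I) (case_prod (G (k, j, j'))) (case_prod D)"
      unfolding inner_on_pairs_eq_trace
      using trace_mul_blockop_matrix_unit[OF k j j'] by (simp add: trace_sandwich)
    also have "\<dots> = 0" unfolding D_pairs using c k j j' unfolding J_def by simp
    finally show "ptrace (mul (mul (adj X) D) X) k j j' = 0" .
  qed
  ultimately show thesis by (rule that)
qed

lemma sandwich_ne_0_if_range_ops: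
  assumes X: "X \<in> Ops" and D: "D \<in> range_ops X" and nz: "D \<noteq> (\<lambda>x y. 0)"
  shows "mul (mul (adj X) D) X \<noteq> (\<lambda>x y. 0)"
proof
  assume zero: "mul (mul (adj X) D) X = (\<lambda>x y. 0)"
  have D_ops: "D \<in> Ops" using D unfolding ops_on_range_def by blast
  obtain W where "mul (adj W) (adj X) = mul X W" and D_eq: "D = mul (mul (mul X W) D) (mul X W)"
    using sandwich_by_range_projection[OF adj_ops[OF X] D_ops] range_ops_kernel[OF X D]
    by (metis adj_adj)
  then have "D = mul (adj W) (mul (mul (mul (adj X) D) X) W)"
    by (metis mul_assoc)
  then show False using nz unfolding zero zero_mul mul_zero by simp
qed

lemma exists_hermitian_direction:
  assumes X: "X \<in> Ops" and D: "D \<in> Ops"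
    and nz: "mul (mul (adj X) D) X \<noteq> (\<lambda>x y. 0)"
    and pt: "partial_traces_vanish (mul (mul (adj X) D) X)"
  obtains H where "H \<in> Ops" and "adj H = H"
    and "partial_traces_vanish (mul (mul (adj X) H) X)" and "mul (mul (adj X) H) X \<noteq> (\<lambda>x y. 0)"
proof -
  define E where "E = mul (mul (adj X) D) X"
  define H where "H w = (\<lambda>x y. w * D x y + cnj w * adj D x y)" for w
  have E_H: "mul (mul (adj X) (H w)) X = (\<lambda>x y. w * E x y + cnj w * adj E x y)" for w
    unfolding H_def sandwich_lincomb E_def by (simp add: adj_mul mul_assoc)
  obtain x y where "E x y \<noteq> 0" using nz unfolding E_def by (meson ext)
  then have "1 * E x y + cnj 1 * adj E x y \<noteq> 0 \<or> \<i> * E x y + cnj \<i> * adj E x y \<noteq> 0"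
    by (auto simp: complex_eq_iff)
  then obtain w where "w * E x y + cnj w * adj E x y \<noteq> 0" by blast
  then have "mul (mul (adj X) (H w)) X \<noteq> (\<lambda>x y. 0)" unfolding E_H fun_eq_iff by blast
  moreover have "H w \<in> Ops" unfolding H_def by (intro lincomb_ops adj_ops D)
  moreover have "adj (H w) = H w" unfolding H_def adj_def by (simp add: algebra_simps)
  moreover have "partial_traces_vanish (mul (mul (adj X) (H w)) X)"
    unfolding E_H using pt unfolding E_def by (rule partial_traces_vanish_hermitian_lincomb)
  ultimately show thesis using that by blast
qed

text \<open>Positivity survives because \<open>\<langle>v, \<Xi> v\<rangle> = \<parallel>X v\<parallel>\<^sup>2\<close> bounds
  \<open>\<bar>\<langle>X v, H X v\<rangle>\<bar>\<close> up to the factor \<open>\<Sum>\<bar>H x y\<bar>\<close>.\<close>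
lemma seedC_perturbation:
  assumes X: "X \<in> Ops" and Xi: "Xi \<in> seedC S d m" and Xi_eq: "Xi = mul (adj X) X"
    and H: "H \<in> Ops" and herm: "adj H = H"
    and pt: "partial_traces_vanish (mul (mul (adj X) H) X)"
    and small: "\<bar>s\<bar> * (\<Sum>x\<in>I. \<Sum>y\<in>I. cmod (H x y)) \<le> 1"
  shows "(\<lambda>x y. Xi x y + of_real s * mul (mul (adj X) H) X x y) \<in> seedC S d m"
proof -
  define E where "E = mul (mul (adj X) H) X"
  define K where "K = (\<Sum>x\<in>I. \<Sum>y\<in>I. cmod (H x y))"
  have "Xi \<in> Ops" using Xi unfolding seedC_def psd_def by blast
  moreover have "E \<in> Ops" unfolding E_def by (intro mul_ops adj_ops X H)
  ultimately have ops: "(\<lambda>x y. Xi x y + of_real s * E x y) \<in> Ops"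
    by (subst ops_def) (auto simp: opsD)
  have form: "Im (inn v (app (\<lambda>x y. Xi x y + of_real s * E x y) v)) = 0
      \<and> 0 \<le> Re (inn v (app (\<lambda>x y. Xi x y + of_real s * E x y) v))" for v
  proof -
    define N where "N = (\<Sum>x\<in>I. (cmod (app X v x))\<^sup>2)"
    define z where "z = inn (app X v) (app H (app X v))"
    have "inn v (app (\<lambda>x y. Xi x y + of_real s * E x y) v) = inn v (app Xi v) + of_real s * inn v (app E v)"
      unfolding op_apply_def inner_H_def by (simp add: algebra_simps sum.distrib sum_distrib_left)
    also have "inn v (app Xi v) = of_real N"
      unfolding Xi_eq app_mul inner_adj unfolding inner_H_eq_inner_on inner_on_self N_def ..
    also have "inn v (app E v) = z" unfolding E_def app_mul inner_adj z_def ..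
    finally have eq: "inn v (app (\<lambda>x y. Xi x y + of_real s * E x y) v) = of_real N + of_real s * z" .
    have "\<bar>Re z\<bar> \<le> K * N"
      using abs_Re_le_cmod[of z] quadratic_form_bound[of "app X v" H]
      unfolding K_def N_def z_def by linarith
    then have "\<bar>s * Re z\<bar> \<le> \<bar>s\<bar> * (K * N)" unfolding abs_mult by (rule mult_left_mono) simp
    also have "\<dots> \<le> N"
      using mult_right_mono[OF small[folded K_def], of N] unfolding N_def
      by (simp add: mult.assoc sum_nonneg)
    finally show ?thesis unfolding eq z_def using hermitian_quadratic_form_real[OF herm] by simp
  qed
  have "(\<Sum>a<d k. Xi (k, a, j) (k, a, j') + of_real s * E (k, a, j) (k, a, j'))
      = (if j = j' then of_nat (d k) else 0)"
    if "k \<in> S" "j < m k" "j' < m k" for k j j'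
    using Xi pt that unfolding seedC_def partial_traces_vanish_def ptrace_def E_def
    by (simp add: sum.distrib sum_distrib_left[symmetric])
  with ops form show ?thesis unfolding seedC_def psd_def E_def by blast
qed

lemma not_extremal_if_hermitian_direction:
  assumes X: "X \<in> Ops" and Xi: "Xi \<in> seedC S d m" and Xi_eq: "Xi = mul (adj X) X"
    and H: "H \<in> Ops" and herm: "adj H = H"
    and pt: "partial_traces_vanish (mul (mul (adj X) H) X)"
    and nz: "mul (mul (adj X) H) X \<noteq> (\<lambda>x y. 0)"
  shows "\<not> extremal_point (seedC S d m) Xi"
proof
  assume extremal: "extremal_point (seedC S d m) Xi"
  define E where "E = mul (mul (adj X) H) X"
  define K where "K = (\<Sum>x\<in>I. \<Sum>y\<in>I. cmod (H x y))"
  define e where "e = 1 / (K + 1)"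
  have "K \<ge> 0" unfolding K_def by (intro sum_nonneg) auto
  then have e: "e > 0" "\<bar>e\<bar> * K \<le> 1" "\<bar>-e\<bar> * K \<le> 1" unfolding e_def by (auto simp: field_simps)
  define Xs where "Xs s = (\<lambda>x y. Xi x y + of_real s * E x y)" for s :: real
  have Xs: "Xs e \<in> seedC S d m" "Xs (-e) \<in> seedC S d m"
    using seedC_perturbation[OF X Xi Xi_eq H herm pt] e unfolding Xs_def E_def K_def by blast+
  have midpoint: "Xi = (\<lambda>x y. of_real (1/2) * Xs e x y + of_real (1 - 1/2) * Xs (-e) x y)"
    unfolding Xs_def by (simp add: algebra_simps)
  have "\<And>A B t. A \<in> seedC S d m \<Longrightarrow> B \<in> seedC S d m \<Longrightarrow> 0 < t \<Longrightarrow> t < 1 \<Longrightarrow>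
      Xi = (\<lambda>x y. of_real t * A x y + of_real (1 - t) * B x y) \<Longrightarrow> A = B"
    using extremal unfolding extremal_point_def by blast
  from this[OF Xs _ _ midpoint] have "Xs e = Xs (-e)" by simp
  then have "of_real e * E x y = - (of_real e * E x y)" for x y
    using fun_cong[OF fun_cong[OF \<open>Xs e = Xs (-e)\<close>, of x], of y] unfolding Xs_def by simp
  then have "E = (\<lambda>x y. 0)" using e(1) by (intro ext) simp
  then show False using nz unfolding E_def by simp
qed

theorem range_ops_eq_block_span_if_extremal:
  assumes X: "X \<in> Ops" and Xi: "Xi \<in> seedC S d m" and Xi_eq: "Xi = mul (adj X) X"
    and extremal: "extremal_point (seedC S d m) Xi"
  shows "range_ops X = block_span X"
proof (rule ccontr)
  assume ne: "range_ops X \<noteq> block_span X"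
  have "block_span X \<subseteq> range_ops X"
    by (rule op_span_subset_range_ops) (use sandwich_in_range_ops[OF X blockop_ops] in blast)
  with ne obtain A0 where "A0 \<in> range_ops X" "A0 \<notin> block_span X" by blast
  then obtain D where D: "D \<in> range_ops X" "D \<noteq> (\<lambda>x y. 0)"
    and pt: "partial_traces_vanish (mul (mul (adj X) D) X)"
    using exists_partial_trace_free_in_range_ops[OF X] by blast
  have "D \<in> Ops" using D(1) unfolding ops_on_range_def by blast
  then obtain H where "H \<in> Ops" "adj H = H" "partial_traces_vanish (mul (mul (adj X) H) X)"
    "mul (mul (adj X) H) X \<noteq> (\<lambda>x y. 0)"
    using exists_hermitian_direction[OF X _ sandwich_ne_0_if_range_ops[OF X D] pt] by blast
  then show False using not_extremal_if_hermitian_direction[OF X Xi Xi_eq] extremal by blast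
qed

end

theorem theorem2:
  fixes S :: "nat set" and d m :: "nat \<Rightarrow> nat" and Xi X :: op
  assumes "finite S"
    and "\<forall>k\<in>S. 0 < d k \<and> 0 < m k"
    and "Xi \<in> seedC S d m"
    and "X \<in> ops S d m"
    and "Xi = op_mult S d m (adj X) X"
  shows "extremal_point (seedC S d m) Xi \<longleftrightarrow>
    ops_on_range S d m X =
      op_span {op_mult S d m (op_mult S d m X (blockop S d m M)) (adj X) | M. True}"
proof -
  interpret finite_isotypic S d m by unfold_locales (rule assms(1))
  show ?thesis
    using extremal_if_range_ops_eq_block_span[OF assms(4,3,5)]
      range_ops_eq_block_span_if_extremal[OF assms(4,3,5)] by blast
qed

end
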